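(* Assume one of the following: (i) $\mathfrak{D}'=\mathfrak{D}$ and $R_1,R_2\in\mathfrak{D}$; (ii) $\mathfrak{T}_a\subseteq\mathfrak{D}'\subseteq\mathfrak{D}$ and $R_1,R_2\in\mathfrak{T}_a$; (iii) $\mathfrak{D}'\in\{\mathfrak{P},\mathfrak{P}^*\}$ and $R_1,R_2\in\mathfrak{D}'$. Then for all $S_1,S_2\in\mathfrak{D}$: if $R_1\sqsubseteq_\Gamma S_1$ and $R_2\sqsubseteq_\Gamma S_2$ with respect to $\mathfrak{D}'$, then $R_1+R_2\sqsubseteq_\Gamma S_1+S_2$ with respect to $\mathfrak{D}'$. Here $+$ denotes the direct (disjoint) sum of digraphs.
   Context: **Digraphs and homomorphisms.** - A digraph $G$ is a pair $(V(G),A(G))$, where $V(G)$ is a finite non-empty set and $A(G)\subseteq V(G)\times V(G)$. Arcs are written $vw$. - $G^*$ is $G$ with all loops $vv$ removed. - A homomorphism $\xi:G\to H$ is a map $V(G)\to V(H)$ with $\xi(v)\xi(w)\in A(H)$ for all $vw\in A(G)$. $\mathcal{H}(G,H)$ is the set of homomorphisms. - A walk is a sequence $v_0,\dots,v_I$ with $I\ge1$ and $v_{i-1}v_i\in A(G)$ for all $i$. It is closed if $v_0=v_I$. **Classes of digraphs.** - $\mathfrak{D}$ is the class of all digraphs. - $\mathfrak{P}$ is the class of finite posets. - $\mathfrak{P}^*=\{P^*:P\in\mathfrak{P}\}$. - $\mathfrak{T}_a=\{G\in\mathfrak{D}: G^*\text{ contains no closed walk}\}$. **Connectivity.** - Two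 vertices $u,w$ are adjacent if $uw\in A(G)$ or $wu\in A(G)$. - For $X\subseteq V(G)$ and $v,w\in X$, the vertices $v$ and $w$ are connected in $X$ if $v=w$, or if there are $z_0=v,\dots,z_I=w$ in $X$ with consecutive terms adjacent. - $\gamma_X(v)$ is the set of $w\in X$ connected to $v$ in $X$. - $\Gamma_\xi(v):=\gamma_{\xi^{-1}(\xi(v))}(v)$. **Schemes.** - $\mathfrak{D}'_r$ is a fixed system of representatives of $\mathfrak{D}'$ up to isomorphism. - A Hom-scheme from $R$ to $S$ with respect to $\mathfrak{D}'$ is a family of maps $\rho_G:\mathcal{H}(G,R)\to\mathcal{H}(G,S)$, $G\in\mathfrak{D}'_r$. - It is strong if all $\rho_G$ are injective. - It is a $\Gamma$-scheme if $\Gamma_{\rho_G(\xi)}(v)=\Gamma_\xi(v)$ for all $G$, $\xi$ and $v$. - $R\sqsubseteq_\Gamma S$ with respect to $\mathfrak{D}'$ means that a strong $\Gamma$-scheme exists. *)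

theory Defs
  imports "HOL-Library.FuncSet"
begin

type_synonym 'a digraph = "'a set \<times> ('a \<times> 'a) set"

definition verts :: "'a digraph \<Rightarrow> 'a set" where "verts G = fst G"
definition arcs :: "'a digraph \<Rightarrow> ('a \<times> 'a) set" where "arcs G = snd G"

definition is_digraph :: "'a digraph \<Rightarrow> bool" where
  "is_digraph G \<longleftrightarrow> finite (verts G) \<and> verts G \<noteq> {} \<and> arcs G \<subseteq> verts G \<times> verts G"

definition loopfree :: "'a digraph \<Rightarrow> 'a digraph" where
  "loopfree G = (verts G, arcs G - {(v, v) | v. True})"

definition homs :: "'a digraph \<Rightarrow> 'b digraph \<Rightarrow> ('a \<Rightarrow> 'b) set" where
  "homs G H = {\<xi> \<in> verts G \<rightarrow>\<^sub>E verts H. \<forall>(v, w) \<in> arcs G. (\<xi> v, \<xi> w) \<in> arcs H}"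

definition is_walk :: "'a digraph \<Rightarrow> 'a list \<Rightarrow> bool" where
  "is_walk G xs \<longleftrightarrow> length xs \<ge> 2 \<and> (\<forall>i. Suc i < length xs \<longrightarrow> (xs ! i, xs ! Suc i) \<in> arcs G)"

definition is_closed_walk :: "'a digraph \<Rightarrow> 'a list \<Rightarrow> bool" where
  "is_closed_walk G xs \<longleftrightarrow> is_walk G xs \<and> hd xs = last xs"

definition in_Ta :: "'a digraph \<Rightarrow> bool" where
  "in_Ta G \<longleftrightarrow> is_digraph G \<and> \<not> (\<exists>xs. is_closed_walk (loopfree G) xs)"

definition is_poset :: "'a digraph \<Rightarrow> bool" where
  "is_poset G \<longleftrightarrow> is_digraph G \<and> refl_on (verts G) (arcs G) \<and> antisym (arcs G) \<and> trans (arcs G)"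

definition in_Pstar :: "'a digraph \<Rightarrow> bool" where
  "in_Pstar G \<longleftrightarrow> (\<exists>P. is_poset P \<and> G = loopfree P)"

definition adjacent :: "'a digraph \<Rightarrow> 'a \<Rightarrow> 'a \<Rightarrow> bool" where
  "adjacent G u w \<longleftrightarrow> (u, w) \<in> arcs G \<or> (w, u) \<in> arcs G"

definition connected_in :: "'a digraph \<Rightarrow> 'a set \<Rightarrow> 'a \<Rightarrow> 'a \<Rightarrow> bool" where
  "connected_in G X v w \<longleftrightarrow> (\<lambda>a b. a \<in> X \<and> b \<in> X \<and> adjacent G a b)\<^sup>*\<^sup>* v w"

definition gamma :: "'a digraph \<Rightarrow> 'a set \<Rightarrow> 'a \<Rightarrow> 'a set" where
  "gamma G X v = {w \<in> X. connected_in G X v w}"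

definition Gamma :: "'a digraph \<Rightarrow> ('a \<Rightarrow> 'b) \<Rightarrow> 'a \<Rightarrow> 'a set" where
  "Gamma G \<xi> v = gamma G {u \<in> verts G. \<xi> u = \<xi> v} v"

definition dsum :: "'a digraph \<Rightarrow> 'b digraph \<Rightarrow> ('a + 'b) digraph" where
  "dsum G H = (Inl ` verts G \<union> Inr ` verts H,
               (\<lambda>(u, w). (Inl u, Inl w)) ` arcs G \<union> (\<lambda>(u, w). (Inr u, Inr w)) ` arcs H)"

text \<open>Classes of test digraphs are represented by sets of digraphs on vertex type nat
  (every finite digraph has an isomorphic copy there).\<close>
definition iso_digraphs :: "'a digraph \<Rightarrow> 'b digraph \<Rightarrow> bool" where
  "iso_digraphs G H \<longleftrightarrow> (\<exists>f. bij_betw f (verts G) (verts H) \<and>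
     (\<forall>u \<in> verts G. \<forall>w \<in> verts G. (u, w) \<in> arcs G \<longleftrightarrow> (f u, f w) \<in> arcs H))"

definition iso_closed :: "nat digraph set \<Rightarrow> bool" where
  "iso_closed C \<longleftrightarrow> (\<forall>G \<in> C. \<forall>H. is_digraph H \<and> iso_digraphs G H \<longrightarrow> H \<in> C)"

definition gamma_le :: "nat digraph set \<Rightarrow> 'a digraph \<Rightarrow> 'b digraph \<Rightarrow> bool" where
  "gamma_le C R S \<longleftrightarrow> (\<exists>\<rho> :: nat digraph \<Rightarrow> (nat \<Rightarrow> 'a) \<Rightarrow> (nat \<Rightarrow> 'b).
     \<forall>G \<in> C. (\<forall>\<xi> \<in> homs G R. \<rho> G \<xi> \<in> homs G S)
           \<and> inj_on (\<rho> G) (homs G R)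
           \<and> (\<forall>\<xi> \<in> homs G R. \<forall>v \<in> verts G. Gamma G (\<rho> G \<xi>) v = Gamma G \<xi> v))"

end

theory Submission
  imports Defs
begin

text \<open>A homomorphism from G to R1 + R2 splits G into two induced subgraphs, the vertices
  mapped into R1 and those mapped into R2. Applying the schemes for R1 and R2 to the two
  pieces and reassembling gives a scheme for the sum; it is injective and preserves the
  \<Gamma>-classes, because a \<Gamma>-class never meets both pieces. This only needs the test class to
  be closed under non-empty induced subgraphs, which holds for all digraphs, for posets and
  for \<open>P*\<close>. The class \<open>T_a\<close> is not closed in this way, so in case (ii) the schemes are first
  extended from \<open>T_a\<close> to all digraphs: when the loop-free part of R has no closed walk,
  every homomorphism G \<rightarrow> R is constant on the strong components of G and therefore
  factors through the condensation of G, which lies in \<open>T_a\<close>.\<close>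

definition strong_gamma_map ::
    "'v digraph \<Rightarrow> 'a digraph \<Rightarrow> 'b digraph \<Rightarrow> (('v \<Rightarrow> 'a) \<Rightarrow> ('v \<Rightarrow> 'b)) \<Rightarrow> bool" where
  "strong_gamma_map G R S r \<longleftrightarrow>
     (\<forall>\<xi> \<in> homs G R. r \<xi> \<in> homs G S) \<and> inj_on r (homs G R) \<and>
     (\<forall>\<xi> \<in> homs G R. \<forall>v \<in> verts G. Gamma G (r \<xi>) v = Gamma G \<xi> v)"

lemma strong_gamma_mapI:
  assumes "\<And>\<xi>. \<xi> \<in> homs G R \<Longrightarrow> r \<xi> \<in> homs G S" "inj_on r (homs G R)"
    and "\<And>\<xi> v. \<xi> \<in> homs G R \<Longrightarrow> v \<in> verts G \<Longrightarrow> Gamma G (r \<xi>) v = Gamma G \<xi> v"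
  shows "strong_gamma_map G R S r"
  using assms by (simp add: strong_gamma_map_def)

lemma strong_gamma_map_hom: "strong_gamma_map G R S r \<Longrightarrow> \<xi> \<in> homs G R \<Longrightarrow> r \<xi> \<in> homs G S"
  and strong_gamma_map_inj: "strong_gamma_map G R S r \<Longrightarrow> inj_on r (homs G R)"
  and strong_gamma_map_Gamma: "strong_gamma_map G R S r \<Longrightarrow> \<xi> \<in> homs G R \<Longrightarrow> v \<in> verts G
      \<Longrightarrow> Gamma G (r \<xi>) v = Gamma G \<xi> v"
  by (simp_all add: strong_gamma_map_def)

lemma gamma_le_iff_strong_gamma_map:
  "gamma_le C R S \<longleftrightarrow> (\<exists>\<rho>. \<forall>G \<in> C. strong_gamma_map G R S (\<rho> G))"
  by (simp add: gamma_le_def strong_gamma_map_def)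

lemma gamma_le_subclass: "gamma_le C R S \<Longrightarrow> C' \<subseteq> C \<Longrightarrow> gamma_le C' R S"
  unfolding gamma_le_def by blast

lemma homs_vert: "\<xi> \<in> homs G H \<Longrightarrow> v \<in> verts G \<Longrightarrow> \<xi> v \<in> verts H"
  by (auto simp: homs_def)

lemma homs_arc: "\<xi> \<in> homs G H \<Longrightarrow> (u, w) \<in> arcs G \<Longrightarrow> (\<xi> u, \<xi> w) \<in> arcs H"
  by (auto simp: homs_def)

lemma homsI:
  assumes "\<And>v. v \<in> verts G \<Longrightarrow> \<xi> v \<in> verts H"
    and "\<And>v. v \<notin> verts G \<Longrightarrow> \<xi> v = undefined"
    and "\<And>u w. (u, w) \<in> arcs G \<Longrightarrow> (\<xi> u, \<xi> w) \<in> arcs H"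
  shows "\<xi> \<in> homs G H"
  using assms by (auto simp: homs_def PiE_def extensional_def)

lemma homs_eqI:
  assumes "\<xi> \<in> homs G H" "\<eta> \<in> homs G H'" "\<And>v. v \<in> verts G \<Longrightarrow> \<xi> v = \<eta> v"
  shows "\<xi> = \<eta>"
proof -
  have "\<xi> \<in> extensional (verts G)" "\<eta> \<in> extensional (verts G)"
    using assms(1,2) by (auto simp: homs_def PiE_def)
  then show ?thesis using assms(3) by (rule extensionalityI)
qed

lemma hom_rtrancl:
  assumes "\<xi> \<in> homs G H" "(u, w) \<in> (arcs G)\<^sup>*"
  shows "(\<xi> u, \<xi> w) \<in> (arcs H)\<^sup>*"
  using assms(2) by induction (auto intro: rtrancl_into_rtrancl homs_arc[OF assms(1)])

definition induced :: "'a digraph \<Rightarrow> 'a set \<Rightarrow> 'a digraph" where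
  "induced G X = (X, arcs G \<inter> X \<times> X)"

lemma verts_induced [simp]: "verts (induced G X) = X"
  and arcs_induced [simp]: "arcs (induced G X) = arcs G \<inter> X \<times> X"
  by (simp_all add: induced_def verts_def arcs_def)

lemma is_digraph_induced:
  "is_digraph G \<Longrightarrow> X \<subseteq> verts G \<Longrightarrow> X \<noteq> {} \<Longrightarrow> is_digraph (induced G X)"
  by (auto simp: is_digraph_def intro: finite_subset)

definition induced_closed :: "'v digraph set \<Rightarrow> bool" where
  "induced_closed C \<longleftrightarrow> (\<forall>G \<in> C. \<forall>X. X \<subseteq> verts G \<and> X \<noteq> {} \<longrightarrow> induced G X \<in> C)"

lemma induced_closed_digraphs: "induced_closed {G. is_digraph G}"
  by (auto simp: induced_closed_def is_digraph_induced)

lemma is_poset_induced: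
  "is_poset G \<Longrightarrow> X \<subseteq> verts G \<Longrightarrow> X \<noteq> {} \<Longrightarrow> is_poset (induced G X)"
  by (auto simp: is_poset_def is_digraph_induced refl_on_def antisym_def trans_def)

lemma induced_closed_posets: "induced_closed {G. is_poset G}"
  by (auto simp: induced_closed_def is_poset_induced)

lemma induced_loopfree: "induced (loopfree G) X = loopfree (induced G X)"
  by (auto simp: induced_def loopfree_def verts_def arcs_def)

lemma is_digraph_if_in_Pstar: "in_Pstar G \<Longrightarrow> is_digraph G"
  by (auto simp: in_Pstar_def is_poset_def is_digraph_def loopfree_def verts_def arcs_def)

lemma in_Pstar_induced:
  assumes "in_Pstar G" "X \<subseteq> verts G" "X \<noteq> {}"
  shows "in_Pstar (induced G X)"
proof -
  obtain P where P: "is_poset P" "G = loopfree P"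
    using assms(1) by (auto simp: in_Pstar_def)
  have "verts G = verts P"
    using P(2) by (simp add: loopfree_def verts_def)
  then have "is_poset (induced P X)"
    using P(1) assms(2,3) by (simp add: is_poset_induced)
  then show ?thesis
    using P(2) induced_loopfree[of P X] unfolding in_Pstar_def by blast
qed

lemma induced_closed_Pstar: "induced_closed {G. in_Pstar G}"
  by (auto simp: induced_closed_def in_Pstar_induced)

lemma Gamma_induced:
  assumes "X \<subseteq> verts G" "v \<in> X"
    and "\<And>u. u \<in> verts G \<Longrightarrow> f u = f v \<Longrightarrow> u \<in> X"
    and "\<And>u. u \<in> X \<Longrightarrow> g u = g v \<longleftrightarrow> f u = f v"
  shows "Gamma G f v = Gamma (induced G X) g v"
proof -
  define F where "F = {u \<in> verts G. f u = f v}"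
  have F: "F = {u \<in> X. g u = g v}"
    using assms by (auto simp: F_def)
  have "(\<lambda>a b. a \<in> F \<and> b \<in> F \<and> adjacent G a b) = (\<lambda>a b. a \<in> F \<and> b \<in> F \<and> adjacent (induced G X) a b)"
    using F by (auto simp: adjacent_def fun_eq_iff)
  then show ?thesis
    unfolding Gamma_def F_def[symmetric] verts_induced F[symmetric]
    by (simp add: gamma_def connected_in_def)
qed

lemma verts_dsum [simp]: "verts (dsum G H) = Inl ` verts G \<union> Inr ` verts H"
  by (simp add: dsum_def verts_def)

lemma arcs_dsum:
  "arcs (dsum G H) = (\<lambda>(u, w). (Inl u, Inl w)) ` arcs G \<union> (\<lambda>(u, w). (Inr u, Inr w)) ` arcs H"
  by (simp add: dsum_def arcs_def)

lemma Inl_Inl_in_arcs_dsum [simp]: "(Inl u, Inl w) \<in> arcs (dsum G H) \<longleftrightarrow> (u, w) \<in> arcs G"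
  by (auto simp: arcs_dsum)

lemma Inr_Inr_in_arcs_dsum [simp]: "(Inr u, Inr w) \<in> arcs (dsum G H) \<longleftrightarrow> (u, w) \<in> arcs H"
  by (auto simp: arcs_dsum)

lemma isl_eq_if_in_arcs_dsum: "(x, y) \<in> arcs (dsum G H) \<Longrightarrow> isl x = isl y"
  by (auto simp: arcs_dsum)

definition inl_verts :: "'v digraph \<Rightarrow> ('v \<Rightarrow> 'a + 'b) \<Rightarrow> 'v set" where
  "inl_verts G \<xi> = {v \<in> verts G. isl (\<xi> v)}"

definition inr_verts :: "'v digraph \<Rightarrow> ('v \<Rightarrow> 'a + 'b) \<Rightarrow> 'v set" where
  "inr_verts G \<xi> = {v \<in> verts G. \<not> isl (\<xi> v)}"

definition inl_part :: "'v digraph \<Rightarrow> ('v \<Rightarrow> 'a + 'b) \<Rightarrow> 'v \<Rightarrow> 'a" where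
  "inl_part G \<xi> = restrict (projl \<circ> \<xi>) (inl_verts G \<xi>)"

definition inr_part :: "'v digraph \<Rightarrow> ('v \<Rightarrow> 'a + 'b) \<Rightarrow> 'v \<Rightarrow> 'b" where
  "inr_part G \<xi> = restrict (projr \<circ> \<xi>) (inr_verts G \<xi>)"

lemma Inl_inl_part: "v \<in> inl_verts G \<xi> \<Longrightarrow> Inl (inl_part G \<xi> v) = \<xi> v"
  by (simp add: inl_verts_def inl_part_def)

lemma Inr_inr_part: "v \<in> inr_verts G \<xi> \<Longrightarrow> Inr (inr_part G \<xi> v) = \<xi> v"
  by (simp add: inr_verts_def inr_part_def)

lemma inl_part_hom:
  assumes \<xi>: "\<xi> \<in> homs G (dsum R1 R2)"
  shows "inl_part G \<xi> \<in> homs (induced G (inl_verts G \<xi>)) R1"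
proof (rule homsI)
  fix v assume "v \<in> verts (induced G (inl_verts G \<xi>))"
  then show "inl_part G \<xi> v \<in> verts R1"
    using homs_vert[OF \<xi>] by (force simp: inl_verts_def inl_part_def)
next
  fix u w assume "(u, w) \<in> arcs (induced G (inl_verts G \<xi>))"
  then have "(Inl (inl_part G \<xi> u), Inl (inl_part G \<xi> w)) \<in> arcs (dsum R1 R2)"
    using homs_arc[OF \<xi>] by (simp add: Inl_inl_part)
  then show "(inl_part G \<xi> u, inl_part G \<xi> w) \<in> arcs R1" by simp
qed (simp add: inl_part_def)

lemma inr_part_hom:
  assumes \<xi>: "\<xi> \<in> homs G (dsum R1 R2)"
  shows "inr_part G \<xi> \<in> homs (induced G (inr_verts G \<xi>)) R2"
proof (rule homsI)
  fix v assume "v \<in> verts (induced G (inr_verts G \<xi>))"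
  then show "inr_part G \<xi> v \<in> verts R2"
    using homs_vert[OF \<xi>] by (force simp: inr_verts_def inr_part_def)
next
  fix u w assume "(u, w) \<in> arcs (induced G (inr_verts G \<xi>))"
  then have "(Inr (inr_part G \<xi> u), Inr (inr_part G \<xi> w)) \<in> arcs (dsum R1 R2)"
    using homs_arc[OF \<xi>] by (simp add: Inr_inr_part)
  then show "(inr_part G \<xi> u, inr_part G \<xi> w) \<in> arcs R2" by simp
qed (simp add: inr_part_def)

lemma eq_if_inl_inr_parts_eq:
  assumes "\<xi> \<in> homs G H" "\<eta> \<in> homs G H'"
    and "\<And>v. v \<in> verts G \<Longrightarrow> isl (\<xi> v) = isl (\<eta> v)"
    and "inl_part G \<xi> = inl_part G \<eta>" "inr_part G \<xi> = inr_part G \<eta>"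
  shows "\<xi> = \<eta>"
proof (rule homs_eqI[OF assms(1,2)])
  fix v assume v: "v \<in> verts G"
  show "\<xi> v = \<eta> v"
  proof (cases "isl (\<xi> v)")
    case True
    then have "projl (\<xi> v) = projl (\<eta> v)"
      using v assms(3) fun_cong[OF assms(4), of v] by (simp add: inl_part_def inl_verts_def)
    then show ?thesis using True v assms(3) by (metis sum.collapse(1))
  next
    case False
    then have "projr (\<xi> v) = projr (\<eta> v)"
      using v assms(3) fun_cong[OF assms(5), of v] by (simp add: inr_part_def inr_verts_def)
    then show ?thesis using False v assms(3) by (metis sum.collapse(2))
  qed
qed

definition sum_gamma_map ::
    "('v digraph \<Rightarrow> ('v \<Rightarrow> 'a) \<Rightarrow> 'v \<Rightarrow> 'c) \<Rightarrow> ('v digraph \<Rightarrow> ('v \<Rightarrow> 'b) \<Rightarrow> 'v \<Rightarrow> 'd) \<Rightarrow>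
     'v digraph \<Rightarrow> ('v \<Rightarrow> 'a + 'b) \<Rightarrow> 'v \<Rightarrow> 'c + 'd" where
  "sum_gamma_map \<rho>1 \<rho>2 G \<xi> = restrict (\<lambda>v.
     if isl (\<xi> v) then Inl (\<rho>1 (induced G (inl_verts G \<xi>)) (inl_part G \<xi>) v)
     else Inr (\<rho>2 (induced G (inr_verts G \<xi>)) (inr_part G \<xi>) v)) (verts G)"

lemma sum_gamma_map_inl_verts:
  "v \<in> inl_verts G \<xi> \<Longrightarrow>
   sum_gamma_map \<rho>1 \<rho>2 G \<xi> v = Inl (\<rho>1 (induced G (inl_verts G \<xi>)) (inl_part G \<xi>) v)"
  by (simp add: sum_gamma_map_def inl_verts_def)

lemma sum_gamma_map_inr_verts:
  "v \<in> inr_verts G \<xi> \<Longrightarrow>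
   sum_gamma_map \<rho>1 \<rho>2 G \<xi> v = Inr (\<rho>2 (induced G (inr_verts G \<xi>)) (inr_part G \<xi>) v)"
  by (simp add: sum_gamma_map_def inr_verts_def)

lemma isl_sum_gamma_map: "v \<in> verts G \<Longrightarrow> isl (sum_gamma_map \<rho>1 \<rho>2 G \<xi> v) = isl (\<xi> v)"
  by (simp add: sum_gamma_map_def)

lemma verts_inl_inr_cases:
  assumes "v \<in> verts G"
  obtains "v \<in> inl_verts G \<xi>" | "v \<in> inr_verts G \<xi>"
  using assms by (auto simp: inl_verts_def inr_verts_def)

context
  fixes G :: "'v digraph"
    and R1 :: "'a digraph" and R2 :: "'b digraph" and S1 :: "'c digraph" and S2 :: "'d digraph"
    and \<rho>1 :: "'v digraph \<Rightarrow> ('v \<Rightarrow> 'a) \<Rightarrow> 'v \<Rightarrow> 'c"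
    and \<rho>2 :: "'v digraph \<Rightarrow> ('v \<Rightarrow> 'b) \<Rightarrow> 'v \<Rightarrow> 'd"
  assumes arcs_G: "arcs G \<subseteq> verts G \<times> verts G"
    and \<rho>1: "\<And>X. X \<subseteq> verts G \<Longrightarrow> X \<noteq> {} \<Longrightarrow> strong_gamma_map (induced G X) R1 S1 (\<rho>1 (induced G X))"
    and \<rho>2: "\<And>X. X \<subseteq> verts G \<Longrightarrow> X \<noteq> {} \<Longrightarrow> strong_gamma_map (induced G X) R2 S2 (\<rho>2 (induced G X))"
begin

lemma strong_gamma_map_inl_verts:
  "v \<in> inl_verts G \<xi> \<Longrightarrow>
   strong_gamma_map (induced G (inl_verts G \<xi>)) R1 S1 (\<rho>1 (induced G (inl_verts G \<xi>)))"
  by (rule \<rho>1) (auto simp: inl_verts_def)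

lemma strong_gamma_map_inr_verts:
  "v \<in> inr_verts G \<xi> \<Longrightarrow>
   strong_gamma_map (induced G (inr_verts G \<xi>)) R2 S2 (\<rho>2 (induced G (inr_verts G \<xi>)))"
  by (rule \<rho>2) (auto simp: inr_verts_def)

lemma inl_part_hom_image:
  "\<xi> \<in> homs G (dsum R1 R2) \<Longrightarrow> v \<in> inl_verts G \<xi> \<Longrightarrow>
   \<rho>1 (induced G (inl_verts G \<xi>)) (inl_part G \<xi>) \<in> homs (induced G (inl_verts G \<xi>)) S1"
  by (blast intro: strong_gamma_map_hom strong_gamma_map_inl_verts inl_part_hom)

lemma inr_part_hom_image:
  "\<xi> \<in> homs G (dsum R1 R2) \<Longrightarrow> v \<in> inr_verts G \<xi> \<Longrightarrow>
   \<rho>2 (induced G (inr_verts G \<xi>)) (inr_part G \<xi>) \<in> homs (induced G (inr_verts G \<xi>)) S2"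
  by (blast intro: strong_gamma_map_hom strong_gamma_map_inr_verts inr_part_hom)

lemma sum_gamma_map_hom:
  assumes \<xi>: "\<xi> \<in> homs G (dsum R1 R2)"
  shows "sum_gamma_map \<rho>1 \<rho>2 G \<xi> \<in> homs G (dsum S1 S2)"
proof (rule homsI)
  fix v assume "v \<in> verts G"
  then show "sum_gamma_map \<rho>1 \<rho>2 G \<xi> v \<in> verts (dsum S1 S2)"
  proof (cases rule: verts_inl_inr_cases[where \<xi> = \<xi>])
    case 1
    then show ?thesis
      using homs_vert[OF inl_part_hom_image[OF \<xi> 1]] by (simp add: sum_gamma_map_inl_verts)
  next
    case 2
    then show ?thesis
      using homs_vert[OF inr_part_hom_image[OF \<xi> 2]] by (simp add: sum_gamma_map_inr_verts)
  qed
next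
  fix u w assume uw: "(u, w) \<in> arcs G"
  then have "u \<in> verts G" "w \<in> verts G" "isl (\<xi> u) = isl (\<xi> w)"
    using arcs_G isl_eq_if_in_arcs_dsum[OF homs_arc[OF \<xi> uw]] by auto
  then consider "u \<in> inl_verts G \<xi>" "w \<in> inl_verts G \<xi>" | "u \<in> inr_verts G \<xi>" "w \<in> inr_verts G \<xi>"
    by (auto simp: inl_verts_def inr_verts_def)
  then show "(sum_gamma_map \<rho>1 \<rho>2 G \<xi> u, sum_gamma_map \<rho>1 \<rho>2 G \<xi> w) \<in> arcs (dsum S1 S2)"
  proof cases
    case 1
    then show ?thesis
      using homs_arc[OF inl_part_hom_image[OF \<xi> 1(1)]] uw by (simp add: sum_gamma_map_inl_verts)
  next
    case 2
    then show ?thesis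
      using homs_arc[OF inr_part_hom_image[OF \<xi> 2(1)]] uw by (simp add: sum_gamma_map_inr_verts)
  qed
qed (simp add: sum_gamma_map_def)

lemma inl_part_eq_if_sum_gamma_map_eq:
  assumes \<xi>: "\<xi> \<in> homs G (dsum R1 R2)" and \<eta>: "\<eta> \<in> homs G (dsum R1 R2)"
    and eq: "sum_gamma_map \<rho>1 \<rho>2 G \<xi> = sum_gamma_map \<rho>1 \<rho>2 G \<eta>"
    and X: "inl_verts G \<xi> = inl_verts G \<eta>"
  shows "inl_part G \<xi> = inl_part G \<eta>"
proof (cases "inl_verts G \<xi> = {}")
  case True
  then show ?thesis using X by (simp add: inl_part_def restrict_def)
next
  case False
  then obtain v where v: "v \<in> inl_verts G \<xi>" by blast
  let ?H = "induced G (inl_verts G \<xi>)"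
  have "\<rho>1 ?H (inl_part G \<xi>) = \<rho>1 ?H (inl_part G \<eta>)"
  proof (rule homs_eqI)
    show "\<rho>1 ?H (inl_part G \<xi>) \<in> homs ?H S1" by (rule inl_part_hom_image[OF \<xi> v])
    show "\<rho>1 ?H (inl_part G \<eta>) \<in> homs ?H S1" using inl_part_hom_image[OF \<eta>] v X by simp
    show "\<rho>1 ?H (inl_part G \<xi>) u = \<rho>1 ?H (inl_part G \<eta>) u" if "u \<in> verts ?H" for u
      using fun_cong[OF eq, of u] that X by (simp add: sum_gamma_map_inl_verts)
  qed
  then show ?thesis
    using inj_onD[OF strong_gamma_map_inj[OF strong_gamma_map_inl_verts[OF v]]]
      inl_part_hom[OF \<xi>] inl_part_hom[OF \<eta>] X
    by simp
qed

lemma inr_part_eq_if_sum_gamma_map_eq: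
  assumes \<xi>: "\<xi> \<in> homs G (dsum R1 R2)" and \<eta>: "\<eta> \<in> homs G (dsum R1 R2)"
    and eq: "sum_gamma_map \<rho>1 \<rho>2 G \<xi> = sum_gamma_map \<rho>1 \<rho>2 G \<eta>"
    and X: "inr_verts G \<xi> = inr_verts G \<eta>"
  shows "inr_part G \<xi> = inr_part G \<eta>"
proof (cases "inr_verts G \<xi> = {}")
  case True
  then show ?thesis using X by (simp add: inr_part_def restrict_def)
next
  case False
  then obtain v where v: "v \<in> inr_verts G \<xi>" by blast
  let ?H = "induced G (inr_verts G \<xi>)"
  have "\<rho>2 ?H (inr_part G \<xi>) = \<rho>2 ?H (inr_part G \<eta>)"
  proof (rule homs_eqI)
    show "\<rho>2 ?H (inr_part G \<xi>) \<in> homs ?H S2" by (rule inr_part_hom_image[OF \<xi> v])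
    show "\<rho>2 ?H (inr_part G \<eta>) \<in> homs ?H S2" using inr_part_hom_image[OF \<eta>] v X by simp
    show "\<rho>2 ?H (inr_part G \<xi>) u = \<rho>2 ?H (inr_part G \<eta>) u" if "u \<in> verts ?H" for u
      using fun_cong[OF eq, of u] that X by (simp add: sum_gamma_map_inr_verts)
  qed
  then show ?thesis
    using inj_onD[OF strong_gamma_map_inj[OF strong_gamma_map_inr_verts[OF v]]]
      inr_part_hom[OF \<xi>] inr_part_hom[OF \<eta>] X
    by simp
qed

lemma sum_gamma_map_inj: "inj_on (sum_gamma_map \<rho>1 \<rho>2 G) (homs G (dsum R1 R2))"
proof (rule inj_onI)
  fix \<xi> \<eta>
  assume \<xi>: "\<xi> \<in> homs G (dsum R1 R2)" and \<eta>: "\<eta> \<in> homs G (dsum R1 R2)"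
    and eq: "sum_gamma_map \<rho>1 \<rho>2 G \<xi> = sum_gamma_map \<rho>1 \<rho>2 G \<eta>"
  have isl: "isl (\<xi> v) = isl (\<eta> v)" if "v \<in> verts G" for v
    using isl_sum_gamma_map[OF that] eq by metis
  then have "inl_verts G \<xi> = inl_verts G \<eta>" "inr_verts G \<xi> = inr_verts G \<eta>"
    by (auto simp: inl_verts_def inr_verts_def)
  then show "\<xi> = \<eta>"
    using eq_if_inl_inr_parts_eq[OF \<xi> \<eta> isl] inl_part_eq_if_sum_gamma_map_eq[OF \<xi> \<eta> eq]
      inr_part_eq_if_sum_gamma_map_eq[OF \<xi> \<eta> eq]
    by blast
qed

lemma sum_gamma_map_Gamma_inl_verts:
  assumes \<xi>: "\<xi> \<in> homs G (dsum R1 R2)" and v: "v \<in> inl_verts G \<xi>"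
  shows "Gamma G (sum_gamma_map \<rho>1 \<rho>2 G \<xi>) v = Gamma G \<xi> v"
proof -
  let ?X = "inl_verts G \<xi>"
  let ?\<sigma> = "sum_gamma_map \<rho>1 \<rho>2 G \<xi>"
  have X: "?X \<subseteq> verts G" "v \<in> verts G" using v by (auto simp: inl_verts_def)
  have \<sigma>_class: "u \<in> ?X" if "u \<in> verts G" "?\<sigma> u = ?\<sigma> v" for u
    using that v isl_sum_gamma_map[OF that(1), of \<rho>1 \<rho>2 \<xi>] isl_sum_gamma_map[OF X(2), of \<rho>1 \<rho>2 \<xi>]
    by (simp add: inl_verts_def)
  have "Gamma G ?\<sigma> v = Gamma (induced G ?X) (\<rho>1 (induced G ?X) (inl_part G \<xi>)) v"
    using v X(1) \<sigma>_class by (intro Gamma_induced) (auto simp: sum_gamma_map_inl_verts)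
  also have "\<dots> = Gamma (induced G ?X) (inl_part G \<xi>) v"
    using v strong_gamma_map_Gamma[OF strong_gamma_map_inl_verts[OF v] inl_part_hom[OF \<xi>]] by simp
  also have "\<dots> = Gamma G \<xi> v"
  proof (rule Gamma_induced[symmetric, OF X(1) v])
    show "u \<in> ?X" if "u \<in> verts G" "\<xi> u = \<xi> v" for u
      using that v by (simp add: inl_verts_def)
    show "inl_part G \<xi> u = inl_part G \<xi> v \<longleftrightarrow> \<xi> u = \<xi> v" if "u \<in> ?X" for u
      using Inl_inl_part[OF that] Inl_inl_part[OF v] by (metis sum.inject(1))
  qed
  finally show ?thesis .
qed

lemma sum_gamma_map_Gamma_inr_verts:
  assumes \<xi>: "\<xi> \<in> homs G (dsum R1 R2)" and v: "v \<in> inr_verts G \<xi>"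
  shows "Gamma G (sum_gamma_map \<rho>1 \<rho>2 G \<xi>) v = Gamma G \<xi> v"
proof -
  let ?X = "inr_verts G \<xi>"
  let ?\<sigma> = "sum_gamma_map \<rho>1 \<rho>2 G \<xi>"
  have X: "?X \<subseteq> verts G" "v \<in> verts G" using v by (auto simp: inr_verts_def)
  have \<sigma>_class: "u \<in> ?X" if "u \<in> verts G" "?\<sigma> u = ?\<sigma> v" for u
    using that v isl_sum_gamma_map[OF that(1), of \<rho>1 \<rho>2 \<xi>] isl_sum_gamma_map[OF X(2), of \<rho>1 \<rho>2 \<xi>]
    by (simp add: inr_verts_def)
  have "Gamma G ?\<sigma> v = Gamma (induced G ?X) (\<rho>2 (induced G ?X) (inr_part G \<xi>)) v"
    using v X(1) \<sigma>_class by (intro Gamma_induced) (auto simp: sum_gamma_map_inr_verts)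
  also have "\<dots> = Gamma (induced G ?X) (inr_part G \<xi>) v"
    using v strong_gamma_map_Gamma[OF strong_gamma_map_inr_verts[OF v] inr_part_hom[OF \<xi>]] by simp
  also have "\<dots> = Gamma G \<xi> v"
  proof (rule Gamma_induced[symmetric, OF X(1) v])
    show "u \<in> ?X" if "u \<in> verts G" "\<xi> u = \<xi> v" for u
      using that v by (simp add: inr_verts_def)
    show "inr_part G \<xi> u = inr_part G \<xi> v \<longleftrightarrow> \<xi> u = \<xi> v" if "u \<in> ?X" for u
      using Inr_inr_part[OF that] Inr_inr_part[OF v] by (metis sum.inject(2))
  qed
  finally show ?thesis .
qed

lemma sum_gamma_map_Gamma:
  "\<xi> \<in> homs G (dsum R1 R2) \<Longrightarrow> v \<in> verts G \<Longrightarrow>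
   Gamma G (sum_gamma_map \<rho>1 \<rho>2 G \<xi>) v = Gamma G \<xi> v"
  by (erule verts_inl_inr_cases[where \<xi> = \<xi>])
    (erule sum_gamma_map_Gamma_inl_verts sum_gamma_map_Gamma_inr_verts; assumption)+

lemma strong_gamma_map_dsum:
  "strong_gamma_map G (dsum R1 R2) (dsum S1 S2) (sum_gamma_map \<rho>1 \<rho>2 G)"
  by (intro strong_gamma_mapI sum_gamma_map_hom sum_gamma_map_inj sum_gamma_map_Gamma)

end

lemma gamma_le_dsum:
  assumes "\<And>G. G \<in> C \<Longrightarrow> is_digraph G" "induced_closed C"
    and "gamma_le C R1 S1" "gamma_le C R2 S2"
  shows "gamma_le C (dsum R1 R2) (dsum S1 S2)"
proof -
  obtain \<rho>1 where \<rho>1: "\<forall>G \<in> C. strong_gamma_map G R1 S1 (\<rho>1 G)"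
    using assms(3) by (auto simp: gamma_le_iff_strong_gamma_map)
  obtain \<rho>2 where \<rho>2: "\<forall>G \<in> C. strong_gamma_map G R2 S2 (\<rho>2 G)"
    using assms(4) by (auto simp: gamma_le_iff_strong_gamma_map)
  have "strong_gamma_map G (dsum R1 R2) (dsum S1 S2) (sum_gamma_map \<rho>1 \<rho>2 G)" if "G \<in> C" for G
    using assms(1)[OF that] assms(2) that \<rho>1 \<rho>2
    by (intro strong_gamma_map_dsum) (auto simp: is_digraph_def induced_closed_def)
  then show ?thesis unfolding gamma_le_iff_strong_gamma_map by blast
qed

lemma acyclic_diff_Id_iff_antisym_rtrancl: "acyclic (r - Id) \<longleftrightarrow> antisym (r\<^sup>*)"
proof
  assume "acyclic (r - Id)"
  then show "antisym (r\<^sup>*)"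
    using acyclic_impl_antisym_rtrancl rtrancl_r_diff_Id by metis
next
  assume antisym: "antisym (r\<^sup>*)"
  show "acyclic (r - Id)"
  proof (rule acyclicI, intro allI notI)
    fix x assume "(x, x) \<in> (r - Id)\<^sup>+"
    then obtain y where "(x, y) \<in> r - Id" "(y, x) \<in> (r - Id)\<^sup>*"
      by (meson tranclD)
    then have "x \<noteq> y" "(x, y) \<in> r\<^sup>*" "(y, x) \<in> r\<^sup>*"
      using rtrancl_r_diff_Id by auto
    then show False using antisym by (auto dest: antisymD)
  qed
qed

lemma walk_nth_trancl:
  assumes "is_walk G xs" "0 < j" "j < length xs"
  shows "(xs ! 0, xs ! j) \<in> (arcs G)\<^sup>+"
  using assms(2,3)
proof (induction j)
  case (Suc j)
  have "(xs ! j, xs ! Suc j) \<in> arcs G"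
    using assms(1) Suc.prems by (simp add: is_walk_def)
  then show ?case
    using Suc by (cases "j = 0") (auto intro: trancl_into_trancl)
qed simp

lemma walk_if_trancl:
  "(x, y) \<in> r\<^sup>+ \<Longrightarrow> \<exists>xs. length xs \<ge> 2 \<and> hd xs = x \<and> last xs = y \<and>
     (\<forall>i. Suc i < length xs \<longrightarrow> (xs ! i, xs ! Suc i) \<in> r)"
proof (induction rule: trancl_induct)
  case (base y)
  then show ?case by (intro exI[of _ "[x, y]"]) (auto simp: less_Suc_eq)
next
  case (step y z)
  then obtain xs where xs: "length xs \<ge> 2" "hd xs = x" "last xs = y"
      "\<forall>i. Suc i < length xs \<longrightarrow> (xs ! i, xs ! Suc i) \<in> r"
    by blast
  have "((xs @ [z]) ! i, (xs @ [z]) ! Suc i) \<in> r" if "Suc i < length (xs @ [z])" for i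
  proof (cases "Suc i < length xs")
    case False
    then have i: "Suc i = length xs" using that by simp
    moreover have "xs \<noteq> []" using xs(1) by auto
    ultimately have "xs ! i = y" using xs(3) by (metis diff_Suc_1 last_conv_nth)
    then show ?thesis using i step.hyps(2) by (simp add: nth_append)
  qed (use xs(4) in \<open>simp add: nth_append\<close>)
  then show ?case using xs by (intro exI[of _ "xs @ [z]"]) (auto simp: hd_append)
qed

lemma closed_walk_iff_not_acyclic: "(\<exists>xs. is_closed_walk G xs) \<longleftrightarrow> \<not> acyclic (arcs G)"
proof
  assume "\<exists>xs. is_closed_walk G xs"
  then obtain xs where xs: "is_walk G xs" "hd xs = last xs"
    by (auto simp: is_closed_walk_def)
  then have "length xs \<ge> 2" "xs \<noteq> []" by (auto simp: is_walk_def)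
  then have "(xs ! 0, xs ! (length xs - 1)) \<in> (arcs G)\<^sup>+"
    by (intro walk_nth_trancl[OF xs(1)]) auto
  then show "\<not> acyclic (arcs G)"
    using xs(2) \<open>xs \<noteq> []\<close> by (auto simp: acyclic_def hd_conv_nth last_conv_nth)
next
  assume "\<not> acyclic (arcs G)"
  then obtain x where "(x, x) \<in> (arcs G)\<^sup>+" by (auto simp: acyclic_def)
  then show "\<exists>xs. is_closed_walk G xs"
    by (auto dest!: walk_if_trancl simp: is_closed_walk_def is_walk_def)
qed

lemma in_Ta_iff_antisym_rtrancl: "in_Ta G \<longleftrightarrow> is_digraph G \<and> antisym ((arcs G)\<^sup>*)"
proof -
  have "arcs (loopfree G) = arcs G - Id"
    by (auto simp: loopfree_def arcs_def)
  then show ?thesis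
    by (simp add: in_Ta_def closed_walk_iff_not_acyclic acyclic_diff_Id_iff_antisym_rtrancl)
qed

definition strongly_connected :: "'a digraph \<Rightarrow> 'a \<Rightarrow> 'a \<Rightarrow> bool" where
  "strongly_connected G u w \<longleftrightarrow> (u, w) \<in> (arcs G)\<^sup>* \<and> (w, u) \<in> (arcs G)\<^sup>*"

definition scc_rep :: "'a digraph \<Rightarrow> 'a \<Rightarrow> 'a" where
  "scc_rep G u = (SOME w. strongly_connected G u w)"

definition condensation :: "'a digraph \<Rightarrow> 'a digraph" where
  "condensation G = (scc_rep G ` verts G, map_prod (scc_rep G) (scc_rep G) ` arcs G)"

definition scc_lift :: "'a digraph \<Rightarrow> ('a \<Rightarrow> 'b) \<Rightarrow> 'a \<Rightarrow> 'b" where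
  "scc_lift G \<zeta> = restrict (\<zeta> \<circ> scc_rep G) (verts G)"

lemma strongly_connected_refl: "strongly_connected G u u"
  by (simp add: strongly_connected_def)

lemma strongly_connected_sym: "strongly_connected G u w \<Longrightarrow> strongly_connected G w u"
  by (simp add: strongly_connected_def)

lemma strongly_connected_trans:
  "strongly_connected G u w \<Longrightarrow> strongly_connected G w x \<Longrightarrow> strongly_connected G u x"
  by (auto simp: strongly_connected_def)

lemma strongly_connected_scc_rep: "strongly_connected G u (scc_rep G u)"
  unfolding scc_rep_def by (rule someI, rule strongly_connected_refl)

lemma scc_rep_eq_iff: "scc_rep G u = scc_rep G w \<longleftrightarrow> strongly_connected G u w"
proof
  assume "scc_rep G u = scc_rep G w"
  then show "strongly_connected G u w"
    by (metis strongly_connected_scc_rep strongly_connected_sym strongly_connected_trans)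
next
  assume "strongly_connected G u w"
  then have "strongly_connected G u = strongly_connected G w"
    by (auto intro: strongly_connected_trans strongly_connected_sym)
  then show "scc_rep G u = scc_rep G w" by (simp add: scc_rep_def)
qed

lemma scc_rep_scc_rep [simp]: "scc_rep G (scc_rep G u) = scc_rep G u"
  by (meson scc_rep_eq_iff strongly_connected_scc_rep strongly_connected_sym)

lemma rtrancl_arcs_in_verts:
  "is_digraph G \<Longrightarrow> (u, w) \<in> (arcs G)\<^sup>* \<Longrightarrow> u \<in> verts G \<Longrightarrow> w \<in> verts G"
  by (erule rtranclE) (auto simp: is_digraph_def)

lemma verts_condensation [simp]: "verts (condensation G) = scc_rep G ` verts G"
  and arcs_condensation: "arcs (condensation G) = map_prod (scc_rep G) (scc_rep G) ` arcs G"
  by (simp_all add: condensation_def verts_def arcs_def)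

lemma is_digraph_condensation: "is_digraph G \<Longrightarrow> is_digraph (condensation G)"
  by (auto simp: is_digraph_def arcs_condensation)

lemma rtrancl_arcs_condensation:
  "(arcs (condensation G))\<^sup>* \<subseteq> (arcs G)\<^sup>*"
proof -
  have "(scc_rep G u, scc_rep G w) \<in> (arcs G)\<^sup>*" if "(u, w) \<in> arcs G" for u w
    using strongly_connected_scc_rep[of G u] strongly_connected_scc_rep[of G w] that
    by (meson rtrancl.rtrancl_into_rtrancl rtrancl_trans strongly_connected_def)
  then have "arcs (condensation G) \<subseteq> (arcs G)\<^sup>*"
    by (auto simp: arcs_condensation)
  then show ?thesis
    using rtrancl_subset_rtrancl by blast
qed

text \<open>A vertex of the condensation with an outgoing arc is its own representative, and two
  representatives that reach each other are strongly connected in G, hence equal.\<close>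
lemma in_Ta_condensation:
  assumes "is_digraph G"
  shows "in_Ta (condensation G)"
  unfolding in_Ta_iff_antisym_rtrancl
proof (intro conjI antisymI)
  show "is_digraph (condensation G)" by (rule is_digraph_condensation[OF assms])
  fix q q' assume qq': "(q, q') \<in> (arcs (condensation G))\<^sup>*" "(q', q) \<in> (arcs (condensation G))\<^sup>*"
  have rep: "scc_rep G p = p" if "(p, p') \<in> (arcs (condensation G))\<^sup>*" "p \<noteq> p'" for p p'
    using that by (auto elim: converse_rtranclE simp: arcs_condensation)
  have "scc_rep G q = scc_rep G q'"
    using qq' rtrancl_arcs_condensation[of G] by (auto simp: scc_rep_eq_iff strongly_connected_def)
  then show "q = q'"
    using rep qq' by metis
qed

lemma hom_eq_if_strongly_connected:
  assumes "antisym ((arcs R)\<^sup>*)" "\<xi> \<in> homs G R" "strongly_connected G u w"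
  shows "\<xi> u = \<xi> w"
  using assms hom_rtrancl[OF assms(2)] by (auto simp: strongly_connected_def dest: antisymD)

lemma scc_lift_hom:
  assumes G: "is_digraph G" and \<zeta>: "\<zeta> \<in> homs (condensation G) S"
  shows "scc_lift G \<zeta> \<in> homs G S"
proof (rule homsI)
  fix u w assume uw: "(u, w) \<in> arcs G"
  then have "(scc_rep G u, scc_rep G w) \<in> arcs (condensation G)"
    by (force simp: arcs_condensation)
  then show "(scc_lift G \<zeta> u, scc_lift G \<zeta> w) \<in> arcs S"
    using G uw homs_arc[OF \<zeta>] by (auto simp: scc_lift_def is_digraph_def)
qed (use homs_vert[OF \<zeta>] in \<open>auto simp: scc_lift_def\<close>)

context
  fixes G :: "'v digraph" and R :: "'a digraph"
  assumes G: "is_digraph G" and R: "antisym ((arcs R)\<^sup>*)"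
begin

lemma hom_scc_rep: "\<xi> \<in> homs G R \<Longrightarrow> \<xi> (scc_rep G u) = \<xi> u"
  using hom_eq_if_strongly_connected[OF R] strongly_connected_scc_rep by metis

lemma restrict_hom_condensation:
  assumes \<xi>: "\<xi> \<in> homs G R"
  shows "restrict \<xi> (verts (condensation G)) \<in> homs (condensation G) R"
proof (rule homsI)
  fix q assume "q \<in> verts (condensation G)"
  then show "restrict \<xi> (verts (condensation G)) q \<in> verts R"
    using hom_scc_rep[OF \<xi>] homs_vert[OF \<xi>] by auto
next
  fix q q' assume "(q, q') \<in> arcs (condensation G)"
  then obtain u w where "(u, w) \<in> arcs G" "q = scc_rep G u" "q' = scc_rep G w"
    by (auto simp: arcs_condensation)
  then show "(restrict \<xi> (verts (condensation G)) q, restrict \<xi> (verts (condensation G)) q') \<in> arcs R"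
    using G hom_scc_rep[OF \<xi>] homs_arc[OF \<xi>] by (auto simp: is_digraph_def)
qed simp

lemma scc_lift_restrict:
  "\<xi> \<in> homs G R \<Longrightarrow> scc_lift G (restrict \<xi> (verts (condensation G))) = \<xi>"
  by (rule homs_eqI[OF scc_lift_hom[OF G restrict_hom_condensation]])
    (auto simp: scc_lift_def hom_scc_rep)

end

lemma scc_lift_inj: "inj_on (scc_lift G) (homs (condensation G) S)"
proof (rule inj_onI)
  fix \<zeta> \<zeta>' assume \<zeta>: "\<zeta> \<in> homs (condensation G) S" "\<zeta>' \<in> homs (condensation G) S"
    and eq: "scc_lift G \<zeta> = scc_lift G \<zeta>'"
  show "\<zeta> = \<zeta>'"
  proof (rule homs_eqI[OF \<zeta>])
    fix q assume "q \<in> verts (condensation G)"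
    then obtain u where "u \<in> verts G" "q = scc_rep G u" by auto
    then show "\<zeta> q = \<zeta>' q" using fun_cong[OF eq, of u] by (simp add: scc_lift_def)
  qed
qed

lemma connected_in_if_strongly_connected:
  assumes "x \<in> F" and F: "\<And>z z'. z \<in> F \<Longrightarrow> strongly_connected G z z' \<Longrightarrow> z' \<in> F"
    and xy: "strongly_connected G x y"
  shows "connected_in G F x y"
proof -
  have "connected_in G F x w" if "(x, w) \<in> (arcs G)\<^sup>*" "(w, y) \<in> (arcs G)\<^sup>*" for w
    using that
  proof (induction rule: rtrancl_induct)
    case base
    then show ?case by (simp add: connected_in_def)
  next
    case (step p w)
    have "(p, y) \<in> (arcs G)\<^sup>*"
      using step by (meson converse_rtrancl_into_rtrancl)
    then have "strongly_connected G x p" "strongly_connected G x w" "connected_in G F x p"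
      using step xy by (auto simp: strongly_connected_def intro: rtrancl_trans)
    moreover have "adjacent G p w"
      using step.hyps(2) by (simp add: adjacent_def)
    ultimately show ?case
      using F[OF \<open>x \<in> F\<close>] unfolding connected_in_def by (simp add: rtranclp.rtrancl_into_rtrancl)
  qed
  then show ?thesis using xy by (simp add: strongly_connected_def)
qed

lemma adjacent_condensationE:
  assumes "adjacent (condensation G) q q'"
  obtains u w where "adjacent G u w" "q = scc_rep G u" "q' = scc_rep G w"
  using assms by (force simp: adjacent_def arcs_condensation)

lemma connected_in_condensation_if_connected_in:
  assumes "connected_in G {u \<in> verts G. scc_rep G u \<in> Q} v u"
  shows "connected_in (condensation G) Q (scc_rep G v) (scc_rep G u)"
  using assms unfolding connected_in_def
proof (induction rule: rtranclp_induct)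
  case (step y z)
  then have "scc_rep G y \<in> Q" "scc_rep G z \<in> Q" "adjacent (condensation G) (scc_rep G y) (scc_rep G z)"
    by (auto simp: adjacent_def arcs_condensation)
  then show ?case using step.IH by (simp add: rtranclp.rtrancl_into_rtrancl)
qed simp

lemma scc_rep_preimage_closed:
  assumes "is_digraph G" "z \<in> {u \<in> verts G. scc_rep G u \<in> Q}" "strongly_connected G z z'"
  shows "z' \<in> {u \<in> verts G. scc_rep G u \<in> Q}"
  using assms rtrancl_arcs_in_verts[OF assms(1), of z z'] scc_rep_eq_iff[of G z z']
  by (auto simp: strongly_connected_def)

lemma connected_in_if_connected_in_condensation:
  assumes G: "is_digraph G" and v: "v \<in> verts G" "scc_rep G v \<in> Q"
    and "connected_in (condensation G) Q (scc_rep G v) q"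
  shows "\<forall>u \<in> verts G. scc_rep G u = q \<longrightarrow> connected_in G {u \<in> verts G. scc_rep G u \<in> Q} v u"
  using assms(4) unfolding connected_in_def[of "condensation G"]
proof (induction rule: rtranclp_induct)
  case base
  show ?case
  proof (intro ballI impI)
    fix u assume "scc_rep G u = scc_rep G v"
    then have "strongly_connected G v u"
      by (simp add: scc_rep_eq_iff strongly_connected_sym)
    with _ scc_rep_preimage_closed[OF G] show "connected_in G {u \<in> verts G. scc_rep G u \<in> Q} v u"
      by (rule connected_in_if_strongly_connected) (simp add: v)
  qed
next
  case (step q1 q2)
  let ?F = "{u \<in> verts G. scc_rep G u \<in> Q}"
  obtain a b where ab: "adjacent G a b" "q1 = scc_rep G a" "q2 = scc_rep G b"
      "scc_rep G a \<in> Q" "scc_rep G b \<in> Q"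
    using step.hyps(2) by (auto elim: adjacent_condensationE)
  then have "a \<in> ?F" "b \<in> ?F"
    using G by (auto simp: adjacent_def is_digraph_def)
  moreover have "connected_in G ?F v a"
    using step.IH ab(2) \<open>a \<in> ?F\<close> by simp
  ultimately have "connected_in G ?F v b"
    using ab(1) unfolding connected_in_def by (simp add: rtranclp.rtrancl_into_rtrancl)
  moreover have "connected_in G ?F b u" if "scc_rep G u = q2" for u
    using \<open>b \<in> ?F\<close> scc_rep_preimage_closed[OF G]
  proof (rule connected_in_if_strongly_connected)
    show "strongly_connected G b u"
      using that ab(3) by (simp add: scc_rep_eq_iff strongly_connected_sym)
  qed
  ultimately show ?case
    unfolding connected_in_def by (meson rtranclp_trans)
qed

lemma Gamma_scc_lift:
  assumes G: "is_digraph G" and v: "v \<in> verts G"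
  shows "Gamma G (scc_lift G \<zeta>) v =
    {u \<in> verts G. scc_rep G u \<in> Gamma (condensation G) \<zeta> (scc_rep G v)}"
proof -
  define Q where "Q = {q \<in> verts (condensation G). \<zeta> q = \<zeta> (scc_rep G v)}"
  define F where "F = {u \<in> verts G. scc_rep G u \<in> Q}"
  have "{u \<in> verts G. scc_lift G \<zeta> u = scc_lift G \<zeta> v} = F"
    using v by (auto simp: F_def Q_def scc_lift_def)
  then have "Gamma G (scc_lift G \<zeta>) v = {u \<in> F. connected_in G F v u}"
    by (simp add: Gamma_def gamma_def)
  also have "\<dots> = {u \<in> verts G. scc_rep G u \<in> Q \<and>
      connected_in (condensation G) Q (scc_rep G v) (scc_rep G u)}"
    using connected_in_condensation_if_connected_in[of G Q v]
      connected_in_if_connected_in_condensation[OF G v, of Q] v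
    by (auto simp: F_def Q_def)
  also have "\<dots> = {u \<in> verts G. scc_rep G u \<in> Gamma (condensation G) \<zeta> (scc_rep G v)}"
    by (simp add: Gamma_def gamma_def Q_def)
  finally show ?thesis .
qed

lemma strong_gamma_map_condensation:
  assumes G: "is_digraph G" and R: "antisym ((arcs R)\<^sup>*)"
    and r: "strong_gamma_map (condensation G) R S r"
  shows "strong_gamma_map G R S (\<lambda>\<xi>. scc_lift G (r (restrict \<xi> (verts (condensation G)))))"
proof (rule strong_gamma_mapI)
  let ?res = "\<lambda>\<xi>. restrict \<xi> (verts (condensation G))"
  have res_hom: "?res \<xi> \<in> homs (condensation G) R" if "\<xi> \<in> homs G R" for \<xi>
    using restrict_hom_condensation[OF G R that] .
  show "scc_lift G (r (?res \<xi>)) \<in> homs G S" if "\<xi> \<in> homs G R" for \<xi>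
    using scc_lift_hom[OF G strong_gamma_map_hom[OF r res_hom[OF that]]] .
  show "inj_on (\<lambda>\<xi>. scc_lift G (r (?res \<xi>))) (homs G R)"
  proof (rule inj_onI)
    fix \<xi> \<eta> assume \<xi>: "\<xi> \<in> homs G R" and \<eta>: "\<eta> \<in> homs G R"
      and eq: "scc_lift G (r (?res \<xi>)) = scc_lift G (r (?res \<eta>))"
    have "r (?res \<xi>) = r (?res \<eta>)"
      using inj_onD[OF scc_lift_inj eq strong_gamma_map_hom[OF r res_hom[OF \<xi>]]
          strong_gamma_map_hom[OF r res_hom[OF \<eta>]]] .
    then have "?res \<xi> = ?res \<eta>"
      by (rule inj_onD[OF strong_gamma_map_inj[OF r] _ res_hom[OF \<xi>] res_hom[OF \<eta>]])
    then show "\<xi> = \<eta>"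
      using scc_lift_restrict[OF G R \<xi>] scc_lift_restrict[OF G R \<eta>] by metis
  qed
  fix \<xi> v assume \<xi>: "\<xi> \<in> homs G R" and v: "v \<in> verts G"
  have "Gamma G (scc_lift G (r (?res \<xi>))) v =
      {u \<in> verts G. scc_rep G u \<in> Gamma (condensation G) (r (?res \<xi>)) (scc_rep G v)}"
    by (rule Gamma_scc_lift[OF G v])
  also have "\<dots> = {u \<in> verts G. scc_rep G u \<in> Gamma (condensation G) (?res \<xi>) (scc_rep G v)}"
    using strong_gamma_map_Gamma[OF r res_hom[OF \<xi>]] v by simp
  also have "\<dots> = Gamma G (scc_lift G (?res \<xi>)) v"
    by (rule Gamma_scc_lift[OF G v, symmetric])
  also have "\<dots> = Gamma G \<xi> v"
    using scc_lift_restrict[OF G R \<xi>] by simp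
  finally show "Gamma G (scc_lift G (r (?res \<xi>))) v = Gamma G \<xi> v" .
qed

lemma gamma_le_digraphs_if_gamma_le_Ta:
  fixes R :: "'a digraph" and S :: "'b digraph"
  assumes R: "antisym ((arcs R)\<^sup>*)" and le: "gamma_le {G. in_Ta G} R S"
  shows "gamma_le {G. is_digraph G} R S"
proof -
  obtain \<rho> :: "nat digraph \<Rightarrow> (nat \<Rightarrow> 'a) \<Rightarrow> nat \<Rightarrow> 'b"
    where \<rho>: "\<forall>G \<in> {G. in_Ta G}. strong_gamma_map G R S (\<rho> G)"
    using le unfolding gamma_le_iff_strong_gamma_map by blast
  show ?thesis
    unfolding gamma_le_iff_strong_gamma_map
  proof (intro exI ballI)
    fix G :: "nat digraph" assume "G \<in> {G. is_digraph G}"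
    then have G: "is_digraph G" by simp
    show "strong_gamma_map G R S
        (\<lambda>\<xi>. scc_lift G (\<rho> (condensation G) (restrict \<xi> (verts (condensation G)))))"
      using bspec[OF \<rho>, of "condensation G"] in_Ta_condensation[OF G]
      by (intro strong_gamma_map_condensation[OF G R]) simp
  qed
qed

theorem corollary6:
  fixes Dp :: "nat digraph set"
    and R1 :: "'a digraph" and R2 :: "'b digraph"
    and S1 :: "'c digraph" and S2 :: "'d digraph"
  assumes cases:
    "(Dp = {G. is_digraph G} \<and> is_digraph R1 \<and> is_digraph R2)
     \<or> ({G. in_Ta G} \<subseteq> Dp \<and> Dp \<subseteq> {G. is_digraph G} \<and> iso_closed Dp \<and> in_Ta R1 \<and> in_Ta R2)
     \<or> (Dp = {G. is_poset G} \<and> is_poset R1 \<and> is_poset R2)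
     \<or> (Dp = {G. in_Pstar G} \<and> in_Pstar R1 \<and> in_Pstar R2)"
    and S1: "is_digraph S1" and S2: "is_digraph S2"
    and le1: "gamma_le Dp R1 S1" and le2: "gamma_le Dp R2 S2"
  shows "gamma_le Dp (dsum R1 R2) (dsum S1 S2)"
  using cases
proof (elim disjE conjE)
  assume "Dp = {G. is_digraph G}"
  then show ?thesis
    using le1 le2 induced_closed_digraphs by (intro gamma_le_dsum) auto
next
  assume Ta: "{G. in_Ta G} \<subseteq> Dp" "Dp \<subseteq> {G. is_digraph G}" "in_Ta R1" "in_Ta R2"
  have "gamma_le {G. is_digraph G} R1 S1" "gamma_le {G. is_digraph G} R2 S2"
    using Ta(3,4) gamma_le_subclass[OF le1 Ta(1)] gamma_le_subclass[OF le2 Ta(1)]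
    by (auto simp: in_Ta_iff_antisym_rtrancl intro: gamma_le_digraphs_if_gamma_le_Ta)
  then have "gamma_le {G. is_digraph G} (dsum R1 R2) (dsum S1 S2)"
    using induced_closed_digraphs by (intro gamma_le_dsum) auto
  then show ?thesis
    using Ta(2) by (rule gamma_le_subclass)
next
  assume "Dp = {G. is_poset G}"
  then show ?thesis
    using le1 le2 induced_closed_posets by (intro gamma_le_dsum) (auto simp: is_poset_def)
next
  assume "Dp = {G. in_Pstar G}"
  then show ?thesis
    using le1 le2 induced_closed_Pstar by (intro gamma_le_dsum) (auto simp: is_digraph_if_in_Pstar)
qed

end
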